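(* Let $X$ be a compact Hausdorff space and $\varphi:X\to X$ a homeomorphism. If $x\in X$ is aperiodic, then the representation $\pi_x$ of the semicrossed product $C(X)\rtimes_\varphi\mathbb{Z}^+$ on $\ell^2(\mathbb{N})$ is a nest representation.
   Context: Semicrossed product: let $\mathcal{A}_0$ be the algebra generated by $C(X)$ and a symbol $U$ subject to $fU=U(f\circ\varphi)$, with elements $\sum_{n=0}^NU^nf_n$; $C(X)\rtimes_\varphi\mathbb{Z}^+$ is its completion in the norm given by the supremum of $\|\pi(F)\|$ over homomorphisms $\pi$ into $\mathcal{B}(\mathcal{H})$ that are $*$-representations on $C(X)$ with $\pi(U)$ an isometry. For $x\in X$ set $x_n=\varphi^{n-1}(x)$, $n\ge1$, and define $\pi_x$ on $\ell^2(\mathbb{N})$ by $\pi_x(f)(z_1,z_2,\dots)=(f(x_1)z_1,f(x_2)z_2,\dots)$ and $\pi_x(U)(z_1,z_2,\dots)=(0,z_1,z_2,\dots)$. A point $x$ is aperiodic if $\varphi^n(x)\neq x$ for all $n\ge1$. A representation is a nest representation if the lattice of closed subspaces invariant under it is linearly ordered by inclusion. *)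

theory Defs
  imports "HOL-Analysis.Analysis"
begin

definition l2 :: "(nat \<Rightarrow> complex) set" where
  "l2 = {z. summable (\<lambda>n. (cmod (z n))\<^sup>2)}"

definition l2_norm :: "(nat \<Rightarrow> complex) \<Rightarrow> real" where
  "l2_norm z = sqrt (\<Sum>n. (cmod (z n))\<^sup>2)"

definition closed_subspace_l2 :: "(nat \<Rightarrow> complex) set \<Rightarrow> bool" where
  "closed_subspace_l2 M \<longleftrightarrow>
     M \<subseteq> l2 \<and> (\<lambda>n. 0) \<in> M \<and>
     (\<forall>u\<in>M. \<forall>v\<in>M. (\<lambda>n. u n + v n) \<in> M) \<and>
     (\<forall>c::complex. \<forall>u\<in>M. (\<lambda>n. c * u n) \<in> M) \<and>
     (\<forall>s z. (\<forall>k. s k \<in> M) \<longrightarrow> z \<in> l2 \<longrightarrow>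
        (\<lambda>k. l2_norm (\<lambda>n. s k n - z n)) \<longlonglongrightarrow> 0 \<longrightarrow> z \<in> M)"

definition shift_l2 :: "(nat \<Rightarrow> complex) \<Rightarrow> nat \<Rightarrow> complex" where
  "shift_l2 z = (\<lambda>n. if n = 0 then 0 else z (n - 1))"

text \<open>pi_x(f): diagonal operator; with 0-based indexing, the n-th coordinate is
  multiplied by f(phi^n x) (this is x_{n+1} = phi^n(x) in the paper's 1-based indexing).\<close>
definition pi_f :: "('a \<Rightarrow> 'a) \<Rightarrow> 'a \<Rightarrow> ('a \<Rightarrow> complex) \<Rightarrow> (nat \<Rightarrow> complex) \<Rightarrow> nat \<Rightarrow> complex" where
  "pi_f \<phi> x f z = (\<lambda>n. f ((\<phi> ^^ n) x) * z n)"

text \<open>Elements of the algebra A_0: finite sums sum_{n=0}^N U^n f_n, represented by the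
  coefficient list [f_0, ..., f_N] of continuous functions on X.\<close>
definition A0_elem :: "'a topology \<Rightarrow> ('a \<Rightarrow> complex) list \<Rightarrow> bool" where
  "A0_elem T fs \<longleftrightarrow> (\<forall>f\<in>set fs. continuous_map T euclidean f)"

definition pi_x :: "('a \<Rightarrow> 'a) \<Rightarrow> 'a \<Rightarrow> ('a \<Rightarrow> complex) list \<Rightarrow> (nat \<Rightarrow> complex) \<Rightarrow> nat \<Rightarrow> complex" where
  "pi_x \<phi> x fs z = (\<lambda>m. \<Sum>n<length fs. (shift_l2 ^^ n) (pi_f \<phi> x (fs ! n) z) m)"

definition invariant_lattice :: "'a topology \<Rightarrow> ('a \<Rightarrow> 'a) \<Rightarrow> 'a \<Rightarrow> (nat \<Rightarrow> complex) set set" where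
  "invariant_lattice T \<phi> x =
     {M. closed_subspace_l2 M \<and> (\<forall>fs. A0_elem T fs \<longrightarrow> (\<forall>z\<in>M. pi_x \<phi> x fs z \<in> M))}"

definition nest_representation :: "'a topology \<Rightarrow> ('a \<Rightarrow> 'a) \<Rightarrow> 'a \<Rightarrow> bool" where
  "nest_representation T \<phi> x \<longleftrightarrow>
     (\<forall>M\<in>invariant_lattice T \<phi> x. \<forall>N\<in>invariant_lattice T \<phi> x. M \<subseteq> N \<or> N \<subseteq> M)"

definition aperiodic :: "('a \<Rightarrow> 'a) \<Rightarrow> 'a \<Rightarrow> bool" where
  "aperiodic \<phi> x \<longleftrightarrow> (\<forall>n\<ge>1. (\<phi> ^^ n) x \<noteq> x)"

end

theory Submission
  imports Defs
begin

text \<open>Since the orbit of \<open>x\<close> is injective, Urysohn's lemma yields continuous functions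
  whose diagonal operators \<open>\<pi>\<^sub>x(f)\<close> approximate the coordinate projection onto any
  \<open>e\<^sub>k\<close>. Hence an invariant subspace containing a vector with nonzero \<open>k\<close>-th coordinate
  contains \<open>e\<^sub>k\<close>, and by shift invariance every \<open>e\<^sub>m\<close> with \<open>m \<ge> k\<close>. So every invariant
  subspace is the closed span of \<open>{e\<^sub>m | m \<ge> n}\<close> for some \<open>n\<close> (or is zero), and these
  subspaces form a chain.\<close>

lemma l2_dominated:
  assumes "b \<in> l2" "\<And>n. cmod (a n) \<le> cmod (b n)"
  shows "a \<in> l2" "l2_norm a \<le> l2_norm b"
proof -
  have sb: "summable (\<lambda>n. (cmod (b n))\<^sup>2)" using assms(1) by (simp add: l2_def)
  have le: "(cmod (a n))\<^sup>2 \<le> (cmod (b n))\<^sup>2" for n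
    using assms(2) by (simp add: power_mono)
  have sa: "summable (\<lambda>n. (cmod (a n))\<^sup>2)"
    by (rule summable_comparison_test[OF _ sb]) (use le in auto)
  then show "a \<in> l2" by (simp add: l2_def)
  show "l2_norm a \<le> l2_norm b" unfolding l2_norm_def
    by (rule real_sqrt_le_mono, rule suminf_le[OF le sa sb])
qed

lemma l2_norm_nonneg: "a \<in> l2 \<Longrightarrow> l2_norm a \<ge> 0"
  unfolding l2_norm_def l2_def by (simp add: suminf_nonneg)

lemma l2_norm_tail_tendsto_0:
  assumes "z \<in> l2"
  shows "(\<lambda>j. l2_norm (\<lambda>n. if n \<le> j then 0 else z n)) \<longlonglongrightarrow> 0"
proof -
  let ?f = "\<lambda>n. (cmod (z n))\<^sup>2"
  have sf: "summable ?f" using assms by (simp add: l2_def)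
  have tail_eq: "(\<Sum>n. (cmod (if n \<le> j then 0 else z n))\<^sup>2) = suminf ?f - (\<Sum>n<Suc j. ?f n)"
    for j
  proof -
    let ?g = "\<lambda>n. (cmod (if n \<le> j then 0 else z n))\<^sup>2"
    have sg: "summable ?g" by (rule summable_comparison_test[OF _ sf]) auto
    have "(\<Sum>n. ?g n) = (\<Sum>n. ?g (n + Suc j))"
      using suminf_split_initial_segment[OF sg, of "Suc j"] by simp
    also have "\<dots> = (\<Sum>n. ?f (n + Suc j))" by simp
    finally show ?thesis
      using suminf_split_initial_segment[OF sf, of "Suc j"] by simp
  qed
  have "(\<lambda>j. suminf ?f - (\<Sum>n<Suc j. ?f n)) \<longlonglongrightarrow> suminf ?f - suminf ?f"
    by (intro tendsto_intros LIMSEQ_Suc[OF summable_LIMSEQ] sf)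
  then have "(\<lambda>j. sqrt (suminf ?f - (\<Sum>n<Suc j. ?f n))) \<longlonglongrightarrow> sqrt 0"
    by (intro tendsto_real_sqrt) simp
  then show ?thesis unfolding l2_norm_def tail_eq by simp
qed

lemma closed_subspace_l2_dominated_limit:
  assumes M: "closed_subspace_l2 M" and s: "\<And>k. s k \<in> M" and z: "z \<in> l2"
    and b: "\<And>k. b k \<in> l2"
    and dom: "\<And>k n. k \<ge> K \<Longrightarrow> cmod (s k n - z n) \<le> cmod (b k n)"
    and lim: "(\<lambda>k. l2_norm (b k)) \<longlonglongrightarrow> 0"
  shows "z \<in> M"
proof -
  have "norm (l2_norm (\<lambda>n. s k n - z n)) \<le> l2_norm (b k)" if "k \<ge> K" for k
    using l2_dominated[OF b dom[OF that]] l2_norm_nonneg by simp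
  then have "\<forall>\<^sub>F k in sequentially. norm (l2_norm (\<lambda>n. s k n - z n)) \<le> l2_norm (b k)"
    unfolding eventually_sequentially by blast
  then have "(\<lambda>k. l2_norm (\<lambda>n. s k n - z n)) \<longlonglongrightarrow> 0"
    by (rule Lim_null_comparison[OF _ lim])
  then show ?thesis using M s z unfolding closed_subspace_l2_def by blast
qed

lemma closed_subspace_l2D:
  assumes "closed_subspace_l2 M"
  shows "M \<subseteq> l2" "(\<lambda>n. 0) \<in> M"
    "\<And>u v. u \<in> M \<Longrightarrow> v \<in> M \<Longrightarrow> (\<lambda>n. u n + v n) \<in> M"
    "\<And>c u. u \<in> M \<Longrightarrow> (\<lambda>n. c * u n) \<in> M"
  using assms unfolding closed_subspace_l2_def by blast+

definition unit_vec :: "nat \<Rightarrow> nat \<Rightarrow> complex" where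
  "unit_vec m = (\<lambda>n. if n = m then 1 else 0)"

lemma shift_l2_unit_vec: "shift_l2 (unit_vec m) = unit_vec (Suc m)"
  by (rule ext) (auto simp: shift_l2_def unit_vec_def)

lemma closed_subspace_l2_truncation:
  assumes M: "closed_subspace_l2 M" and units: "\<And>m. z m \<noteq> 0 \<Longrightarrow> unit_vec m \<in> M"
  shows "(\<lambda>n. if n \<le> j then z n else 0) \<in> M"
proof -
  note zero = closed_subspace_l2D(2)[OF M]
    and add = closed_subspace_l2D(3)[OF M] and smult = closed_subspace_l2D(4)[OF M]
  have single: "(\<lambda>n. if n = m then z m else 0) \<in> M" for m
  proof (cases "z m = 0")
    case True
    then show ?thesis using zero by (simp add: if_distrib cong: if_cong)
  next
    case False
    have "(\<lambda>n. z m * unit_vec m n) = (\<lambda>n. if n = m then z m else 0)"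
      by (auto simp: unit_vec_def)
    then show ?thesis using smult[OF units[OF False]] by metis
  qed
  show ?thesis
  proof (induction j)
    case 0
    have "(\<lambda>n. if n = 0 then z 0 else 0) = (\<lambda>n. if n \<le> 0 then z n else 0)" by auto
    then show ?case using single[of 0] by simp
  next
    case (Suc j)
    have "(\<lambda>n. (if n \<le> j then z n else 0) + (if n = Suc j then z (Suc j) else 0))
        = (\<lambda>n. if n \<le> Suc j then z n else 0)"
      by (auto simp: le_Suc_eq)
    then show ?case using add[OF Suc single[of "Suc j"]] by metis
  qed
qed

lemma closed_subspace_l2_from_unit_vecs:
  assumes M: "closed_subspace_l2 M" and z: "z \<in> l2"
    and units: "\<And>m. z m \<noteq> 0 \<Longrightarrow> unit_vec m \<in> M"
  shows "z \<in> M"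
proof (rule closed_subspace_l2_dominated_limit[OF M _ z, where K = 0
      and s = "\<lambda>j n. if n \<le> j then z n else 0" and b = "\<lambda>j n. if n \<le> j then 0 else z n"])
  show "(\<lambda>n. if n \<le> j then z n else 0) \<in> M" for j
    by (rule closed_subspace_l2_truncation[OF M units])
  show "(\<lambda>n. if n \<le> j then 0 else z n) \<in> l2" for j
    by (rule l2_dominated(1)[OF z]) simp
  show "(\<lambda>j. l2_norm (\<lambda>n. if n \<le> j then 0 else z n)) \<longlonglongrightarrow> 0"
    by (rule l2_norm_tail_tendsto_0[OF z])
qed (simp add: if_distrib)

text \<open>The multipliers \<open>d j\<close> agree with the indicator of \<open>{k}\<close> up to index \<open>j\<close>, so
  \<open>d j \<cdot> w\<close> differs from \<open>w k \<cdot> e\<^sub>k\<close> only by a part of the tail of \<open>w\<close>.\<close>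

lemma closed_subspace_l2_isolate_coordinate:
  assumes M: "closed_subspace_l2 M" and w: "w \<in> M" "w k \<noteq> 0"
    and mult: "\<And>j. (\<lambda>n. d j n * w n) \<in> M"
    and at_k: "\<And>j. d j k = 1"
    and vanish: "\<And>j i. i \<le> j \<Longrightarrow> i \<noteq> k \<Longrightarrow> d j i = 0"
    and bounded: "\<And>j n. cmod (d j n) \<le> 1"
  shows "unit_vec k \<in> M"
proof -
  have wl2: "w \<in> l2" using closed_subspace_l2D(1)[OF M] w by blast
  have "(\<lambda>n. w k * unit_vec k n) \<in> M"
  proof (rule closed_subspace_l2_dominated_limit[OF M mult, where K = k
      and b = "\<lambda>j n. if n \<le> j then 0 else w n"])
    show "(\<lambda>n. w k * unit_vec k n) \<in> l2"
      by (rule l2_dominated(1)[OF wl2]) (auto simp: unit_vec_def)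
    show "(\<lambda>n. if n \<le> j then 0 else w n) \<in> l2" for j
      by (rule l2_dominated(1)[OF wl2]) simp
    show "cmod (d j n * w n - w k * unit_vec k n) \<le> cmod (if n \<le> j then 0 else w n)"
      if "k \<le> j" for j n
    proof (cases "n \<le> j")
      case True
      then show ?thesis using at_k[of j] vanish[of n j] by (auto simp: unit_vec_def)
    next
      case False
      then have "n \<noteq> k" using that by auto
      then show ?thesis
        using False bounded[of j n] by (simp add: unit_vec_def norm_mult mult_left_le_one_le)
    qed
    show "(\<lambda>j. l2_norm (\<lambda>n. if n \<le> j then 0 else w n)) \<longlonglongrightarrow> 0"
      by (rule l2_norm_tail_tendsto_0[OF wl2])
  qed
  moreover have "(\<lambda>n. inverse (w k) * (w k * unit_vec k n)) = unit_vec k"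
    using w(2) by (simp add: fun_eq_iff)
  ultimately show ?thesis using closed_subspace_l2D(4)[OF M] by metis
qed

lemma aperiodic_orbit_inj:
  assumes "inj_on \<phi> S" "\<phi> ` S \<subseteq> S" "x \<in> S" "aperiodic \<phi> x"
  shows "inj (\<lambda>n. (\<phi> ^^ n) x)"
proof -
  have orbit: "(\<phi> ^^ n) x \<in> S" for n
    by (induction n) (use assms(2,3) in auto)
  have cancel: "(\<phi> ^^ d) x = x" if "(\<phi> ^^ (i + d)) x = (\<phi> ^^ i) x" for i d
    using that
  proof (induction i)
    case (Suc i)
    then show ?case using assms(1) orbit by (simp add: inj_on_def)
  qed simp
  have "i = k" if "(\<phi> ^^ i) x = (\<phi> ^^ k) x" "i \<le> k" for i k
  proof -
    have "(\<phi> ^^ (k - i)) x = x" using cancel[of i "k - i"] that by simp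
    then have "\<not> k - i \<ge> 1" using assms(4) unfolding aperiodic_def by blast
    then show ?thesis using that(2) by simp
  qed
  then show ?thesis unfolding inj_def by (metis nle_le)
qed

lemma compact_Hausdorff_separate_point_finite:
  assumes "compact_space T" "Hausdorff_space T"
    and "finite S" "S \<subseteq> topspace T" "p \<in> topspace T" "p \<notin> S"
  obtains f :: "'a \<Rightarrow> complex"
  where "continuous_map T euclidean f" "f p = 1" "\<And>y. y \<in> S \<Longrightarrow> f y = 0"
    "\<And>y. y \<in> topspace T \<Longrightarrow> cmod (f y) \<le> 1"
proof -
  have "normal_space T" "t1_space T"
    using assms compact_Hausdorff_or_regular_imp_normal_space Hausdorff_imp_t1_space by blast+
  then have "closedin T S" "closedin T {p}" "disjnt S {p}"
    using assms by (auto simp: t1_space_closedin_finite disjnt_def)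
  then obtain g where g: "continuous_map T (top_of_set {0..1::real}) g"
    "g ` S \<subseteq> {0}" "g ` {p} \<subseteq> {1}"
    using Urysohn_lemma \<open>normal_space T\<close> by (metis zero_le_one)
  have "continuous_map euclideanreal euclidean complex_of_real"
    by (simp add: continuous_on_of_real continuous_on_id)
  then have "continuous_map T euclidean (complex_of_real \<circ> g)"
    using continuous_map_compose continuous_map_into_fulltopology[OF g(1)] by blast
  moreover have "cmod (complex_of_real (g y)) \<le> 1" if "y \<in> topspace T" for y
    using continuous_map_image_subset_topspace[OF g(1)] that by auto
  ultimately show ?thesis using that[of "complex_of_real \<circ> g"] g(2,3) by auto
qed

lemma invariant_subspace_contains_unit_vec:
  assumes "compact_space T" "Hausdorff_space T"
    and orbit: "\<And>n. (\<phi> ^^ n) x \<in> topspace T" and inj: "inj (\<lambda>n. (\<phi> ^^ n) x)"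
    and M: "M \<in> invariant_lattice T \<phi> x" and w: "w \<in> M" "w k \<noteq> 0"
  shows "unit_vec k \<in> M"
proof -
  have "\<exists>f. continuous_map T euclidean f \<and> f ((\<phi> ^^ k) x) = 1 \<and>
      (\<forall>i\<le>j. i \<noteq> k \<longrightarrow> f ((\<phi> ^^ i) x) = 0) \<and> (\<forall>n. cmod (f ((\<phi> ^^ n) x)) \<le> 1)" for j
  proof -
    let ?S = "(\<lambda>i. (\<phi> ^^ i) x) ` ({..j} - {k})"
    have "(\<phi> ^^ k) x \<notin> ?S" using inj by (auto simp: inj_def)
    moreover have "finite ?S" "?S \<subseteq> topspace T" using orbit by auto
    ultimately obtain f where "continuous_map T euclidean f" "f ((\<phi> ^^ k) x) = 1"
      "\<And>y. y \<in> ?S \<Longrightarrow> f y = 0" "\<And>y. y \<in> topspace T \<Longrightarrow> cmod (f y) \<le> 1"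
      using compact_Hausdorff_separate_point_finite[OF assms(1,2)] orbit by metis
    then show ?thesis using orbit by blast
  qed
  then obtain F where F: "\<And>j. continuous_map T euclidean (F j)" "\<And>j. F j ((\<phi> ^^ k) x) = 1"
    "\<And>j i. i \<le> j \<Longrightarrow> i \<noteq> k \<Longrightarrow> F j ((\<phi> ^^ i) x) = 0" "\<And>j n. cmod (F j ((\<phi> ^^ n) x)) \<le> 1"
    by metis
  have "pi_x \<phi> x [F j] w \<in> M" for j
    using M w(1) F(1) by (auto simp: invariant_lattice_def A0_elem_def)
  then have "(\<lambda>n. F j ((\<phi> ^^ n) x) * w n) \<in> M" for j
    by (simp add: pi_x_def pi_f_def)
  with M show ?thesis
    by (intro closed_subspace_l2_isolate_coordinate[OF _ w, of "\<lambda>j n. F j ((\<phi> ^^ n) x)"])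
      (auto simp: invariant_lattice_def F)
qed

lemma invariant_subspace_shift_unit_vec:
  assumes M: "M \<in> invariant_lattice T \<phi> x" and "unit_vec k \<in> M" "k \<le> m"
  shows "unit_vec m \<in> M"
proof -
  have "pi_x \<phi> x [\<lambda>_. 0, \<lambda>_. 1] z = shift_l2 z" for z
    by (simp add: pi_x_def numeral_2_eq_2 lessThan_Suc pi_f_def shift_l2_def)
  moreover have "A0_elem T [\<lambda>_. 0, \<lambda>_. 1]" by (simp add: A0_elem_def)
  ultimately have shift: "shift_l2 z \<in> M" if "z \<in> M" for z
    using M that unfolding invariant_lattice_def by (metis (mono_tags, lifting) mem_Collect_eq)
  have "unit_vec (k + d) \<in> M" for d
  proof (induction d)
    case (Suc d)
    then show ?case using shift[OF Suc] by (simp add: shift_l2_unit_vec)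
  qed (simp add: assms(2))
  then show ?thesis using \<open>k \<le> m\<close> le_Suc_ex by blast
qed

definition support_upset :: "(nat \<Rightarrow> complex) set \<Rightarrow> nat set" where
  "support_upset M = {m. \<exists>w\<in>M. \<exists>k\<le>m. w k \<noteq> 0}"

lemma support_upset_linear: "support_upset M \<subseteq> support_upset N \<or> support_upset N \<subseteq> support_upset M"
proof -
  have up: "m' \<in> support_upset A" if "m \<in> support_upset A" "m \<le> m'" for A m m'
    using that unfolding support_upset_def by (auto intro: order_trans)
  show ?thesis
  proof (rule ccontr)
    assume "\<not> ?thesis"
    then obtain m n where "m \<in> support_upset M" "m \<notin> support_upset N"
      "n \<in> support_upset N" "n \<notin> support_upset M" by blast
    then show False using up nle_le by metis
  qed
qed

lemma invariant_subspace_eq_support_upset: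
  assumes "compact_space T" "Hausdorff_space T"
    and "\<And>n. (\<phi> ^^ n) x \<in> topspace T" "inj (\<lambda>n. (\<phi> ^^ n) x)"
    and M: "M \<in> invariant_lattice T \<phi> x"
  shows "M = {z \<in> l2. \<forall>m. z m \<noteq> 0 \<longrightarrow> m \<in> support_upset M}"
proof
  have cs: "closed_subspace_l2 M" using M by (simp add: invariant_lattice_def)
  then show "M \<subseteq> {z \<in> l2. \<forall>m. z m \<noteq> 0 \<longrightarrow> m \<in> support_upset M}"
    using closed_subspace_l2D(1) by (auto simp: support_upset_def)
  show "{z \<in> l2. \<forall>m. z m \<noteq> 0 \<longrightarrow> m \<in> support_upset M} \<subseteq> M"
  proof safe
    fix z assume z: "z \<in> l2" and supp: "\<forall>m. z m \<noteq> 0 \<longrightarrow> m \<in> support_upset M"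
    have "unit_vec m \<in> M" if nonzero: "z m \<noteq> 0" for m
    proof -
      obtain w k where "w \<in> M" "k \<le> m" "w k \<noteq> 0"
        using supp nonzero by (auto simp: support_upset_def)
      then show ?thesis
        using invariant_subspace_contains_unit_vec[OF assms(1-4) M]
          invariant_subspace_shift_unit_vec[OF M] by blast
    qed
    then show "z \<in> M" by (rule closed_subspace_l2_from_unit_vecs[OF cs z])
  qed
qed

theorem proposition1:
  fixes T :: "'a topology" and \<phi> :: "'a \<Rightarrow> 'a" and x :: 'a
  assumes "compact_space T" and "Hausdorff_space T"
    and "homeomorphic_map T T \<phi>"
    and "x \<in> topspace T"
    and "aperiodic \<phi> x"
  shows "nest_representation T \<phi> x"
proof -
  have maps: "\<phi> ` topspace T \<subseteq> topspace T" and inj_phi: "inj_on \<phi> (topspace T)"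
    using homeomorphic_imp_surjective_map homeomorphic_imp_injective_map assms(3) by blast+
  have orbit: "(\<phi> ^^ n) x \<in> topspace T" for n
    by (induction n) (use maps assms(4) in auto)
  have inj: "inj (\<lambda>n. (\<phi> ^^ n) x)"
    by (rule aperiodic_orbit_inj[OF inj_phi maps assms(4,5)])
  note eq = invariant_subspace_eq_support_upset[OF assms(1,2) orbit inj]
  show ?thesis
    unfolding nest_representation_def
  proof (intro ballI)
    fix M N assume "M \<in> invariant_lattice T \<phi> x" "N \<in> invariant_lattice T \<phi> x"
    then show "M \<subseteq> N \<or> N \<subseteq> M"
      using eq support_upset_linear[of M N] by blast
  qed
qed

end
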